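(* Let $n\ge2$ and $\mathcal N=\mathbb R^{2n}$ with coordinates $(q,p)\in\mathbb R^n\times\mathbb R^n$ and symplectic form $\omega=\sum_{i=1}^n dp_i\wedge dq_i$. Let $H_0(q,p)=\frac12|p|^2+v_0(q)$ and $H(q,p)=H_0(q,p)+v(q)$, where $v_0\in C^\infty(\mathbb R^n)$ and $v\in C_0^\infty(\mathbb R^n)$ satisfy $$\sup_{q}\bigl(v_0(q)+\tfrac12\langle q,\nabla v_0(q)\rangle\bigr)<\infty,\qquad \inf_q v_0(q)>-\infty,$$ and let $E\in\mathbb R$ be such that $E$ is not a critical value of $v_0$ or of $v_0+v$, and $E>\sup_q\bigl(v_0(q)+\frac12\langle q,\nabla v_0(q)\rangle\bigr)$. Fix $R\in\mathbb R$ and let $\Gamma=\{(q,p): H_0(q,p)=E,\ \langle q,p\rangle=R\}\subset A_0(E)$. Then Assumption 1 holds at energy $E$ for the pair $H_0,H$, and Assumption 2 holds with this $\Gamma$.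
   Context: $\langle\cdot,\cdot\rangle$ is the Euclidean inner product on $\mathbb R^n$. For Hamiltonians $H_0,H$, $X_0,X$ are the Hamiltonian vector fields ($\omega(X_0,\cdot)=-dH_0$, $\omega(X,\cdot)=-dH$) with flows $\Phi^0_t,\Phi_t$; $G(E)=\{H\le E\}$, $A(E)=\{H=E\}$, $G_0(E)=\{H_0\le E\}$, $A_0(E)=\{H_0=E\}$. Assumption 1 (at energy $E$): (i) $dH\neq0$ on $A(E)$, $dH_0\ne0$ on $A_0(E)$; (ii) $\Phi^0_t$ on $A_0(E)$ and $\Phi_t$ on $A(E)$ are defined for all $t\in\mathbb R$; (iii) for every compact $K\subset A_0(E)$ there is $T>0$ with $\Phi^0_t(x)\notin K$ for all $x\in K$, $|t|\ge T$; (iv) $G(E)\cap\operatorname{supp}(H-H_0)$ and $G_0(E)\cap\operatorname{supp}(H-H_0)$ are compact. Assumption 2 (for a set $\Gamma$): $\Gamma\subset A_0(E)$ is a smooth submanifold of dimension $2n-2$ such that (a) $X_0(x)\notin T_x\Gamma$ for all $x\in\Gamma$, and (b) for every $x\in A_0(E)$ there exist a unique $z\in\Gamma$ and a unique $t\in\mathbb R$ with $x=\Phi^0_t(z)$. *)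

theory Defs
  imports "HOL-Analysis.Analysis"
begin

coinductive c_inf_on :: "'a::euclidean_space set \<Rightarrow> ('a \<Rightarrow> real) \<Rightarrow> bool"
  for S :: "'a set" where
  "(\<forall>x\<in>S. f differentiable (at x)) \<Longrightarrow>
   (\<forall>b\<in>Basis. c_inf_on S (\<lambda>x. frechet_derivative f (at x) b)) \<Longrightarrow>
   c_inf_on S f"

definition grad :: "(real^'n \<Rightarrow> real) \<Rightarrow> real^'n \<Rightarrow> real^'n" where
  "grad f q = (\<chi> i. frechet_derivative f (at q) (axis i 1))"

definition critical_value :: "(real^'n \<Rightarrow> real) \<Rightarrow> real \<Rightarrow> bool" where
  "critical_value f E \<longleftrightarrow> (\<exists>q. grad f q = 0 \<and> f q = E)"

definition supp :: "('a::topological_space \<Rightarrow> real) \<Rightarrow> 'a set" where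
  "supp f = closure {x. f x \<noteq> 0}"

text \<open>omega = sum_i dp_i wedge dq_i, evaluated on (a,b),(c,d) in (q,p)-components.\<close>
definition symp_form :: "((real^'n) \<times> (real^'n)) \<Rightarrow> ((real^'n) \<times> (real^'n)) \<Rightarrow> real" where
  "symp_form X Y = snd X \<bullet> fst Y - snd Y \<bullet> fst X"

definition ham_vf :: "((real^'n) \<times> (real^'n) \<Rightarrow> real) \<Rightarrow> (real^'n) \<times> (real^'n) \<Rightarrow> (real^'n) \<times> (real^'n)" where
  "ham_vf H x = (THE X. \<forall>Y. symp_form X Y = - frechet_derivative H (at x) Y)"

definition mech_ham :: "(real^'n \<Rightarrow> real) \<Rightarrow> (real^'n) \<times> (real^'n) \<Rightarrow> real" where
  "mech_ham V = (\<lambda>(q,p). (1/2) * (norm p)^2 + V q)"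

definition integral_curve :: "('a::real_normed_vector \<Rightarrow> 'a) \<Rightarrow> (real \<Rightarrow> 'a) \<Rightarrow> 'a \<Rightarrow> bool" where
  "integral_curve X \<gamma> x \<longleftrightarrow> \<gamma> 0 = x \<and> (\<forall>t. (\<gamma> has_vector_derivative X (\<gamma> t)) (at t))"

definition flow_complete_on :: "('a::real_normed_vector \<Rightarrow> 'a) \<Rightarrow> 'a set \<Rightarrow> bool" where
  "flow_complete_on X S \<longleftrightarrow> (\<forall>x\<in>S. \<exists>\<gamma>. integral_curve X \<gamma> x)"

definition flow :: "('a::real_normed_vector \<Rightarrow> 'a) \<Rightarrow> real \<Rightarrow> 'a \<Rightarrow> 'a" where
  "flow X t x = (THE \<gamma>. integral_curve X \<gamma> x) t"

definition smooth_submanifold :: "'a::euclidean_space set \<Rightarrow> nat \<Rightarrow> bool" where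
  "smooth_submanifold M k \<longleftrightarrow> k \<le> DIM('a) \<and>
     (\<forall>x\<in>M. \<exists>U F. open U \<and> x \<in> U \<and>
        (\<forall>i<DIM('a) - k. c_inf_on U (F i)) \<and>
        (\<forall>y\<in>M \<inter> U. \<forall>c::nat \<Rightarrow> real.
            (\<forall>w. (\<Sum>i<DIM('a) - k. c i * frechet_derivative (F i) (at y) w) = 0)
              \<longrightarrow> (\<forall>i<DIM('a) - k. c i = 0)) \<and>
        M \<inter> U = {y\<in>U. \<forall>i<DIM('a) - k. F i y = 0})"

definition tangent_space :: "'a::real_normed_vector set \<Rightarrow> 'a \<Rightarrow> 'a set" where
  "tangent_space M x = {v. \<exists>\<gamma> e. e > 0 \<and> \<gamma> 0 = x \<and> \<gamma> ` {-e<..<e} \<subseteq> M \<and>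
                                 (\<gamma> has_vector_derivative v) (at 0)}"

definition assumption1 ::
  "((real^'n) \<times> (real^'n) \<Rightarrow> real) \<Rightarrow> ((real^'n) \<times> (real^'n) \<Rightarrow> real) \<Rightarrow> real \<Rightarrow> bool" where
  "assumption1 H0 H E \<longleftrightarrow>
     (\<forall>x. H x = E \<longrightarrow> frechet_derivative H (at x) \<noteq> (\<lambda>_. 0)) \<and>
     (\<forall>x. H0 x = E \<longrightarrow> frechet_derivative H0 (at x) \<noteq> (\<lambda>_. 0)) \<and>
     flow_complete_on (ham_vf H0) {x. H0 x = E} \<and>
     flow_complete_on (ham_vf H) {x. H x = E} \<and>
     (\<forall>K. compact K \<and> K \<subseteq> {x. H0 x = E} \<longrightarrow>
        (\<exists>T>0. \<forall>x\<in>K. \<forall>t. \<bar>t\<bar> \<ge> T \<longrightarrow> flow (ham_vf H0) t x \<notin> K)) \<and>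
     compact ({x. H x \<le> E} \<inter> supp (\<lambda>x. H x - H0 x)) \<and>
     compact ({x. H0 x \<le> E} \<inter> supp (\<lambda>x. H x - H0 x))"

definition assumption2 ::
  "((real^'n) \<times> (real^'n) \<Rightarrow> real) \<Rightarrow> real \<Rightarrow> ((real^'n) \<times> (real^'n)) set \<Rightarrow> bool" where
  "assumption2 H0 E \<Gamma> \<longleftrightarrow>
     \<Gamma> \<subseteq> {x. H0 x = E} \<and>
     smooth_submanifold \<Gamma> (2 * CARD('n) - 2) \<and>
     (\<forall>x\<in>\<Gamma>. ham_vf H0 x \<notin> tangent_space \<Gamma> x) \<and>
     (\<forall>x. H0 x = E \<longrightarrow> (\<exists>!zt. fst zt \<in> \<Gamma> \<and> x = flow (ham_vf H0) (snd zt) (fst zt)))"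

end

theory Submission
  imports Defs
begin

text \<open>
  Energy conservation bounds the momentum on each energy surface, so solutions of
  Hamilton's equations grow at most linearly in time. Solving the equations for the vector
  field composed with the projection onto a large ball (which is globally Lipschitz) and a
  continuity argument therefore give global integral curves, unique since the vector field
  is locally Lipschitz.

  The key quantity is the dilation \<open>q \<bullet> p\<close>. Along the free flow on \<open>H\<^sub>0 = E\<close> its
  derivative is \<open>|p|\<^sup>2 - q \<bullet> \<nabla>v\<^sub>0 = 2 (E - v\<^sub>0 - q \<bullet> \<nabla>v\<^sub>0 / 2)\<close>, which the virial
  hypothesis bounds below by a positive constant. Hence \<open>q \<bullet> p\<close> grows at least linearly
  along every orbit: orbits leave every compact set, cross \<open>{q \<bullet> p = R}\<close> exactly once and
  transversally, and \<open>dH\<^sub>0\<close> and \<open>d(q \<bullet> p)\<close> are independent on \<open>\<Gamma>\<close>.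
\<close>

section \<open>Uniqueness and global existence for ODEs\<close>

lemma norm_diff_ode_solutions_le:
  fixes f :: "'a::real_normed_vector \<Rightarrow> 'a"
  assumes lip: "L-lipschitz_on K f"
    and J: "convex J" "s \<in> J" "t \<in> J"
    and \<gamma>1: "\<And>u. u \<in> J \<Longrightarrow> (\<gamma>1 has_vector_derivative f (\<gamma>1 u)) (at u within J)"
    and \<gamma>2: "\<And>u. u \<in> J \<Longrightarrow> (\<gamma>2 has_vector_derivative f (\<gamma>2 u)) (at u within J)"
    and in_K: "\<And>u. u \<in> J \<Longrightarrow> \<gamma>1 u \<in> K \<and> \<gamma>2 u \<in> K"
    and bound: "\<And>u. u \<in> J \<Longrightarrow> norm (\<gamma>1 u - \<gamma>2 u) \<le> M"
    and "\<gamma>1 s = \<gamma>2 s"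
  shows "norm (\<gamma>1 t - \<gamma>2 t) \<le> L * M * norm (t - s)"
proof -
  define g where "g u = \<gamma>1 u - \<gamma>2 u" for u
  have L0: "L \<ge> 0" using lip lipschitz_on_nonneg by blast
  have "norm (g t - g s) \<le> (L * M) * norm (t - s)"
  proof (rule differentiable_bound[OF J(1) _ _ J(3,2)])
    fix u assume u: "u \<in> J"
    have "(g has_vector_derivative f (\<gamma>1 u) - f (\<gamma>2 u)) (at u within J)"
      unfolding g_def using \<gamma>1[OF u] \<gamma>2[OF u] by (rule has_vector_derivative_diff)
    then show "(g has_derivative (\<lambda>v. v *\<^sub>R (f (\<gamma>1 u) - f (\<gamma>2 u)))) (at u within J)"
      by (simp add: has_vector_derivative_def)
    have "norm (f (\<gamma>1 u) - f (\<gamma>2 u)) \<le> L * norm (\<gamma>1 u - \<gamma>2 u)"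
      using lipschitz_onD[OF lip] in_K[OF u] by (simp add: dist_norm)
    also have "\<dots> \<le> L * M" using bound[OF u] L0 by (rule mult_left_mono)
    finally show "onorm (\<lambda>v::real. v *\<^sub>R (f (\<gamma>1 u) - f (\<gamma>2 u))) \<le> L * M"
      by (simp add: onorm_scaleR_left[OF bounded_linear_ident] onorm_id)
  qed
  then show ?thesis using \<open>\<gamma>1 s = \<gamma>2 s\<close> by (simp add: g_def)
qed

lemma ode_solutions_coincide_near:
  fixes f :: "'a::real_normed_vector \<Rightarrow> 'a"
  assumes lip: "L-lipschitz_on (cball x r) f" and r: "r > 0"
    and I: "is_interval I" "s \<in> I"
    and \<gamma>1: "\<And>t. t \<in> I \<Longrightarrow> (\<gamma>1 has_vector_derivative f (\<gamma>1 t)) (at t within I)"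
    and \<gamma>2: "\<And>t. t \<in> I \<Longrightarrow> (\<gamma>2 has_vector_derivative f (\<gamma>2 t)) (at t within I)"
    and at_s: "\<gamma>1 s = x" "\<gamma>2 s = x"
  shows "\<exists>h>0. \<forall>t\<in>I. dist t s < h \<longrightarrow> \<gamma>1 t = \<gamma>2 t"
proof -
  have L0: "L \<ge> 0" using lip lipschitz_on_nonneg by blast
  have "continuous_on I \<gamma>1" "continuous_on I \<gamma>2"
    using \<gamma>1 \<gamma>2 has_vector_derivative_continuous continuous_on_eq_continuous_within by blast+
  then obtain d where d: "d > 0"
    and near: "\<And>t. t \<in> I \<Longrightarrow> dist t s < d \<Longrightarrow> \<gamma>1 t \<in> cball x r \<and> \<gamma>2 t \<in> cball x r"
    using I(2) r at_s unfolding continuous_on_iff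
    by (metis (no_types, lifting) dist_commute less_imp_le mem_cball min_less_iff_conj)
  \<comment> \<open>On a window of length \<open>h\<close> with \<open>L h \<le> 1/2\<close> the difference is at most half its own supremum.\<close>
  define h where "h = min (d / 2) (1 / (2 * (L + 1)))"
  have h: "h > 0" "h < d" "L * h \<le> 1 / 2"
    using d L0 by (auto simp: h_def min_def field_simps)
  define J where "J = I \<inter> cball s h"
  have J: "convex J" "s \<in> J" "J \<subseteq> I"
    using I h(1) is_interval_convex by (auto simp: J_def intro: convex_Int)
  have J_near: "\<gamma>1 t \<in> cball x r \<and> \<gamma>2 t \<in> cball x r" if "t \<in> J" for t
    using near that h(2) by (auto simp: J_def dist_commute)
  define M where "M = (SUP t\<in>J. norm (\<gamma>1 t - \<gamma>2 t))"
  have "norm (\<gamma>1 t - \<gamma>2 t) \<le> 2 * r" if "t \<in> J" for t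
    using J_near[OF that] dist_triangle2[of "\<gamma>1 t" "\<gamma>2 t" x] by (simp add: dist_norm norm_minus_commute)
  then have le_M: "norm (\<gamma>1 t - \<gamma>2 t) \<le> M" if "t \<in> J" for t
    unfolding M_def using that by (intro cSUP_upper2[where x = t] bdd_aboveI) auto
  have M0: "M \<ge> 0" using le_M[OF J(2)] norm_ge_zero order_trans by blast
  have sol_J: "(\<gamma>1 has_vector_derivative f (\<gamma>1 u)) (at u within J)"
    "(\<gamma>2 has_vector_derivative f (\<gamma>2 u)) (at u within J)" if "u \<in> J" for u
    using \<gamma>1 \<gamma>2 that J(3) by (auto intro: has_vector_derivative_within_subset)
  have half: "norm (\<gamma>1 t - \<gamma>2 t) \<le> M / 2" if "t \<in> J" for t
  proof -
    have "norm (\<gamma>1 t - \<gamma>2 t) \<le> L * M * norm (t - s)"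
      using J(1,2) that J_near le_M at_s sol_J by (intro norm_diff_ode_solutions_le[OF lip]) auto
    also have "\<dots> \<le> L * M * h"
      using that L0 M0 by (intro mult_left_mono) (auto simp: J_def dist_norm norm_minus_commute)
    also have "\<dots> \<le> M / 2" using mult_right_mono[OF h(3) M0] by (simp add: algebra_simps)
    finally show ?thesis .
  qed
  have "M \<le> M / 2" unfolding M_def using J(2) half by (intro cSUP_least) (auto simp: M_def)
  then have "M = 0" using M0 by simp
  then have "\<gamma>1 t = \<gamma>2 t" if "t \<in> J" for t using le_M[OF that] by simp
  then show ?thesis using h(1) by (auto simp: J_def dist_commute intro!: exI[of _ h])
qed

lemma ode_solutions_unique:
  fixes f :: "'a::real_normed_vector \<Rightarrow> 'a"
  assumes loclip: "\<And>x. \<exists>r>0. \<exists>L. L-lipschitz_on (cball x r) f"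
    and I: "is_interval I" "a \<in> I"
    and \<gamma>1: "\<And>t. t \<in> I \<Longrightarrow> (\<gamma>1 has_vector_derivative f (\<gamma>1 t)) (at t within I)"
    and \<gamma>2: "\<And>t. t \<in> I \<Longrightarrow> (\<gamma>2 has_vector_derivative f (\<gamma>2 t)) (at t within I)"
    and eq: "\<gamma>1 a = \<gamma>2 a"
  shows "\<forall>t\<in>I. \<gamma>1 t = \<gamma>2 t"
proof -
  define Z where "Z = {t\<in>I. \<gamma>1 t - \<gamma>2 t = 0}"
  have "continuous_on I (\<lambda>t. \<gamma>1 t - \<gamma>2 t)"
    using \<gamma>1 \<gamma>2 has_vector_derivative_continuous continuous_on_eq_continuous_within
    by (blast intro: continuous_on_diff)
  then have "closedin (top_of_set I) Z"
    unfolding Z_def by (rule continuous_closedin_preimage_constant)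
  moreover have "openin (top_of_set I) Z"
    unfolding openin_euclidean_subtopology_iff
  proof (intro conjI ballI)
    fix s assume "s \<in> Z"
    then have s: "s \<in> I" "\<gamma>1 s = \<gamma>2 s" by (auto simp: Z_def)
    obtain r L where "r > 0" "L-lipschitz_on (cball (\<gamma>1 s) r) f" using loclip by blast
    from ode_solutions_coincide_near[OF this(2,1) I(1) s(1) \<gamma>1 \<gamma>2 refl s(2)[symmetric]]
    show "\<exists>e>0. \<forall>t\<in>I. dist t s < e \<longrightarrow> t \<in> Z" by (auto simp: Z_def)
  qed (auto simp: Z_def)
  moreover have "connected I" "Z \<noteq> {}"
    using I eq is_interval_connected by (auto simp: Z_def)
  ultimately have "Z = I" using connected_clopen by blast
  then show ?thesis by (auto simp: Z_def)
qed

lemma has_integral_scaled_power: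
  assumes "0 \<le> t"
  shows "((\<lambda>s. c * s ^ n) has_integral c * t ^ Suc n / Suc n) {0..t}"
proof -
  have "((\<lambda>s::real. c * s ^ Suc n / Suc n) has_real_derivative c * (Suc n * s ^ n) / Suc n) (at s)"
    for s :: real
    by (intro derivative_eq_intros) auto
  then show ?thesis
    using fundamental_theorem_of_calculus[OF assms, of "\<lambda>s. c * s ^ Suc n / Suc n" "\<lambda>s. c * s ^ n"]
    by (simp add: has_real_derivative_iff_has_vector_derivative has_vector_derivative_at_within)
qed

primrec picard :: "('a::banach \<Rightarrow> 'a) \<Rightarrow> 'a \<Rightarrow> nat \<Rightarrow> real \<Rightarrow> 'a" where
  "picard f x0 0 = (\<lambda>t. x0)"
| "picard f x0 (Suc k) = (\<lambda>t. x0 + integral {0..t} (\<lambda>s. f (picard f x0 k s)))"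

declare picard.simps(2)[simp del]

context
  fixes f :: "'a::banach \<Rightarrow> 'a" and L :: real and x0 :: 'a
  assumes lip: "L-lipschitz_on UNIV f"
begin

private lemma L_nonneg: "L \<ge> 0"
  using lip lipschitz_on_nonneg by blast

private lemma norm_diff_le: "norm (f a - f b) \<le> L * norm (a - b)"
  using lipschitz_onD[OF lip, of a b] by (simp add: dist_norm)

private lemma continuous_on_comp: "continuous_on S g \<Longrightarrow> continuous_on S (\<lambda>s. f (g s))"
  using continuous_on_compose2[OF lipschitz_on_continuous_on[OF lip]] by blast

lemma continuous_on_picard: "continuous_on {0..T} (picard f x0 k)"
proof (induction k arbitrary: T)
  case (Suc k)
  then have "continuous_on {0..T} (\<lambda>t. integral {0..t} (\<lambda>s. f (picard f x0 k s)))"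
    by (intro indefinite_integral_continuous_1 integrable_continuous_real continuous_on_comp)
  then show ?case by (simp add: picard.simps(2) continuous_intros)
qed simp

lemma integrable_picard: "(\<lambda>s. f (picard f x0 k s)) integrable_on {0..t}"
  by (intro integrable_continuous_real continuous_on_comp continuous_on_picard)

lemma norm_picard_step_le:
  "0 \<le> t \<Longrightarrow> norm (picard f x0 (Suc k) t - picard f x0 k t) \<le> norm (f x0) * L ^ k * t ^ Suc k / fact (Suc k)"
proof (induction k arbitrary: t)
  case (Suc k)
  define c where "c = norm (f x0) * L ^ Suc k / fact (Suc k)"
  have "picard f x0 (Suc (Suc k)) t - picard f x0 (Suc k) t =
        integral {0..t} (\<lambda>s. f (picard f x0 (Suc k) s) - f (picard f x0 k s))"
    using integral_diff[OF integrable_picard[of "Suc k"] integrable_picard[of k]]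
    by (simp add: picard.simps(2))
  also have "norm \<dots> \<le> integral {0..t} (\<lambda>s. c * s ^ Suc k)"
  proof (rule integral_norm_bound_integral)
    show "(\<lambda>s. c * s ^ Suc k) integrable_on {0..t}"
      using has_integral_scaled_power[OF Suc.prems] by blast
    fix s assume s: "s \<in> {0..t}"
    have "norm (f (picard f x0 (Suc k) s) - f (picard f x0 k s))
        \<le> L * norm (picard f x0 (Suc k) s - picard f x0 k s)"
      by (rule norm_diff_le)
    also have "\<dots> \<le> L * (norm (f x0) * L ^ k * s ^ Suc k / fact (Suc k))"
      using Suc.IH[of s] s L_nonneg by (intro mult_left_mono) auto
    also have "\<dots> = c * s ^ Suc k" by (simp add: c_def)
    finally show "norm (f (picard f x0 (Suc k) s) - f (picard f x0 k s)) \<le> c * s ^ Suc k" .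
  qed (intro integrable_diff integrable_picard)
  also have "\<dots> = c * t ^ Suc (Suc k) / Suc (Suc k)"
    using has_integral_scaled_power[OF Suc.prems] by (rule integral_unique)
  also have "\<dots> = norm (f x0) * L ^ Suc k * t ^ Suc (Suc k) / fact (Suc (Suc k))"
    by (simp add: c_def field_simps)
  finally show ?case .
qed (simp add: picard.simps(2))

lemma norm_picard_step_le_exp_series:
  assumes "t \<in> {0..T}"
  shows "norm (picard f x0 (Suc k) t - picard f x0 k t) \<le> norm (f x0) * T * ((L * T) ^ k / fact k)"
proof -
  have "norm (picard f x0 (Suc k) t - picard f x0 k t) \<le> norm (f x0) * L ^ k * t ^ Suc k / fact (Suc k)"
    by (rule norm_picard_step_le) (use assms in simp)
  also have "\<dots> \<le> norm (f x0) * L ^ k * T ^ Suc k / fact k"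
    using assms L_nonneg
    by (intro frac_le mult_left_mono power_mono fact_mono) (auto simp del: fact_Suc)
  also have "\<dots> = norm (f x0) * T * ((L * T) ^ k / fact k)"
    by (simp add: power_mult_distrib)
  finally show ?thesis .
qed

definition picard_limit :: "real \<Rightarrow> 'a" where
  "picard_limit t = x0 + (\<Sum>k. picard f x0 (Suc k) t - picard f x0 k t)"

lemma uniform_limit_picard: "uniform_limit {0..T} (picard f x0) picard_limit sequentially"
proof -
  have "summable (\<lambda>k. norm (f x0) * T * ((L * T) ^ k / fact k))"
    using summable_exp[of "L * T"] by (intro summable_mult) (simp add: field_simps)
  from uniform_limit_add[OF uniform_limit_const Weierstrass_m_test[OF norm_picard_step_le_exp_series this]]
  have "uniform_limit {0..T} (\<lambda>n t. x0 + (\<Sum>k<n. picard f x0 (Suc k) t - picard f x0 k t))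
      picard_limit sequentially"
    unfolding picard_limit_def .
  moreover have "x0 + (\<Sum>k<n. picard f x0 (Suc k) t - picard f x0 k t) = picard f x0 n t" for n t
    using sum_lessThan_telescope[of "\<lambda>k. picard f x0 k t" n] by simp
  ultimately show ?thesis by simp
qed

lemma continuous_on_picard_limit: "continuous_on {0..T} picard_limit"
  by (rule uniform_limit_theorem[OF _ uniform_limit_picard])
    (auto intro: always_eventually continuous_on_picard)

\<comment> \<open>The integral equation passes to the limit because \<open>f\<close> is uniformly continuous.\<close>
lemma picard_limit_integral_eq:
  assumes t: "0 \<le> t"
  shows "picard_limit t = x0 + integral {0..t} (\<lambda>s. f (picard_limit s))"
proof -
  have "uniform_limit {0..t} (\<lambda>n s. f (picard f x0 n s)) (\<lambda>s. f (picard_limit s)) sequentially"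
    by (rule uniform_limit_compose_uniformly_continuous_on[OF uniform_limit_picard
          lipschitz_on_uniformly_continuous[OF lip]]) auto
  from uniform_limit_integral[OF this continuous_on_comp[OF continuous_on_picard]]
  obtain I J where IJ: "\<And>n. ((\<lambda>s. f (picard f x0 n s)) has_integral I n) {0..t}"
    "((\<lambda>s. f (picard_limit s)) has_integral J) {0..t}" "I \<longlonglongrightarrow> J"
    by auto
  have "(\<lambda>n. picard f x0 (Suc n) t) \<longlonglongrightarrow> x0 + J"
    using IJ(3) by (simp add: picard.simps(2) integral_unique[OF IJ(1)] tendsto_add)
  moreover have "(\<lambda>n. picard f x0 (Suc n) t) \<longlonglongrightarrow> picard_limit t"
    using tendsto_uniform_limitI[OF uniform_limit_picard, of t t] t by (auto intro: LIMSEQ_Suc)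
  ultimately show ?thesis using IJ(2) LIMSEQ_unique by (simp add: integral_unique)
qed

lemma picard_limit_has_vector_derivative:
  assumes t: "0 \<le> t"
  shows "(picard_limit has_vector_derivative f (picard_limit t)) (at t within {0..})"
proof -
  have tT: "t \<in> {0..t + 1}" using t by simp
  have "((\<lambda>u. x0 + integral {0..u} (\<lambda>s. f (picard_limit s))) has_vector_derivative f (picard_limit t))
      (at t within {0..t + 1})"
    using integral_has_vector_derivative[OF continuous_on_comp[OF continuous_on_picard_limit] tT]
    by (auto intro!: derivative_eq_intros)
  then have "(picard_limit has_vector_derivative f (picard_limit t)) (at t within {0..t + 1})"
    by (rule has_vector_derivative_transform[OF tT, rotated]) (simp add: picard_limit_integral_eq)
  moreover have "at t within {0..t + 1} = at t within {0..}"
    by (rule at_within_nhd[of _ "{..<t + 1}"]) auto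
  ultimately show ?thesis by simp
qed

lemma picard_limit_0: "picard_limit 0 = x0"
  using picard_limit_integral_eq[of 0] by simp

end

lemma lipschitz_ode_solution_exists:
  fixes f :: "'a::banach \<Rightarrow> 'a"
  assumes lip: "L-lipschitz_on UNIV f"
  shows "\<exists>\<gamma>. \<gamma> 0 = x0 \<and> (\<forall>t. (\<gamma> has_vector_derivative f (\<gamma> t)) (at t))"
proof -
  have lip': "L-lipschitz_on UNIV (\<lambda>x. - f x)" using lip by simp
  define y where "y = picard_limit f x0"
  define z where "z = picard_limit (\<lambda>x. - f x) x0"
  \<comment> \<open>Backward solution: \<open>z\<close> solves the reversed equation forward in time.\<close>
  define \<gamma> where "\<gamma> t = (if t \<in> {0..} then y t else z (- t))" for t
  have y: "(y has_vector_derivative f (y t)) (at t within {0..} \<union> closure {0..} \<inter> closure {..0})"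
    if "t \<in> {0..} \<union> closure {0..} \<inter> closure {..0}" for t
    using that picard_limit_has_vector_derivative[OF lip] by (simp add: y_def insert_absorb)
  have z: "((\<lambda>s. z (- s)) has_vector_derivative f (z (- t)))
      (at t within {..0} \<union> closure {0..} \<inter> closure {..0})"
    if "t \<in> {..0} \<union> closure {0..} \<inter> closure {..0}" for t
  proof -
    have "(z has_vector_derivative - f (z (- t))) (at (- t) within uminus ` {..0})"
      using that picard_limit_has_vector_derivative[OF lip', of "- t"] by (simp add: z_def)
    moreover have "(uminus has_vector_derivative - 1) (at t within {..0})"
      by (auto intro!: derivative_eq_intros)
    ultimately have "((\<lambda>s. z (- s)) has_vector_derivative f (z (- t))) (at t within {..0})"
      using vector_diff_chain_within by (fastforce simp: o_def)
    then show ?thesis by (simp add: insert_absorb)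
  qed
  have "(\<gamma> has_vector_derivative (if t \<in> {0..} then f (y t) else f (z (- t)))) (at t within UNIV)" for t
    unfolding \<gamma>_def
  proof (rule has_vector_derivative_If_within_closures[where T = "{..0}"])
    show "y t = z (- t)" "f (y t) = f (z (- t))" if "t \<in> closure {0..}" "t \<in> closure {..0}"
      using that by (auto simp: y_def z_def picard_limit_0[OF lip] picard_limit_0[OF lip'])
  qed (use y z in auto)
  then have "(\<gamma> has_vector_derivative f (\<gamma> t)) (at t)" for t
    by (simp add: \<gamma>_def if_distrib)
  moreover have "\<gamma> 0 = x0" by (simp add: \<gamma>_def y_def picard_limit_0[OF lip])
  ultimately show ?thesis by blast
qed

lemma continuous_bootstrap:
  fixes g :: "real \<Rightarrow> real"
  assumes cont: "continuous_on {0..T} g" and g0: "g 0 \<le> \<rho>" and "\<rho> < R"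
    and step: "\<And>t. t \<in> {0..T} \<Longrightarrow> \<forall>s\<in>{0..t}. g s \<le> R \<Longrightarrow> g t \<le> \<rho>"
  shows "\<forall>t\<in>{0..T}. g t \<le> \<rho>"
proof (rule ccontr)
  define m where "m = (\<rho> + R) / 2"
  have m: "\<rho> < m" "m < R" unfolding m_def using \<open>\<rho> < R\<close> by auto
  define C where "C = {0..T} \<inter> g -` {m..}"
  assume "\<not> (\<forall>t\<in>{0..T}. g t \<le> \<rho>)"
  then obtain t where t: "t \<in> {0..T}" "g t > \<rho>" by auto
  then have "\<not> (\<forall>s\<in>{0..t}. g s \<le> R)" using step[OF t(1)] by fastforce
  then obtain s where s: "s \<in> {0..t}" "g s > R" by (auto simp: not_le)
  have "closed C" unfolding C_def by (rule continuous_closed_preimage[OF cont]) auto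
  moreover have "bounded C" unfolding C_def by (rule bounded_subset[of "{0..T}"]) auto
  ultimately have "compact C" using compact_eq_bounded_closed by blast
  moreover have "s \<in> C" using s t m unfolding C_def by auto
  \<comment> \<open>The first time \<open>t1\<close> at which \<open>g\<close> reaches \<open>m\<close>; before it \<open>g \<le> m < R\<close>, so the step applies.\<close>
  ultimately obtain t1 where t1: "t1 \<in> C" "\<And>u. u \<in> C \<Longrightarrow> t1 \<le> u"
    using compact_attains_inf[of C] by blast
  have t1T: "t1 \<in> {0..T}" and gt1: "g t1 \<ge> m" using t1 unfolding C_def by auto
  have "t1 > 0" using gt1 g0 m t1T by (cases "t1 = 0") auto
  have "g u < m" if "u \<in> {0..<t1}" for u
    using t1(2)[of u] that t1T unfolding C_def by force
  then have "g ` closure {0..<t1} \<subseteq> {..m}"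
  proof (intro image_closure_subset)
    show "continuous_on (closure {0..<t1}) g"
      using \<open>t1 > 0\<close> t1T by (auto intro: continuous_on_subset[OF cont])
  qed (auto simp: less_imp_le)
  then have "\<forall>u\<in>{0..t1}. g u \<le> R" using \<open>t1 > 0\<close> m by auto
  then have "g t1 \<le> \<rho>" using step t1T by blast
  then show False using gt1 m by auto
qed


lemma lipschitz_on_comp_closest_point:
  fixes f :: "'a::euclidean_space \<Rightarrow> 'b::metric_space"
  assumes "L-lipschitz_on K f" and "convex K" "closed K" "K \<noteq> {}"
  shows "L-lipschitz_on UNIV (f \<circ> closest_point K)"
proof -
  have "1-lipschitz_on UNIV (closest_point K)"
    using closest_point_lipschitz[OF assms(2-4)] by (auto intro: lipschitz_onI)
  then have "(L * 1)-lipschitz_on UNIV (f \<circ> closest_point K)"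
    by (rule lipschitz_on_compose)
      (use assms(1) closest_point_in_set[OF assms(3,4)] lipschitz_on_subset in blast)
  then show ?thesis by simp
qed

lemma ode_solution_on_interval_if_growth_bounded:
  fixes f :: "'a::euclidean_space \<Rightarrow> 'a" and \<rho> :: "real \<Rightarrow> real"
  assumes lip: "\<And>c r. \<exists>L. L-lipschitz_on (cball c r) f"
    and "mono \<rho>"
    and growth: "\<And>T \<gamma> t. \<gamma> 0 = x0 \<Longrightarrow>
      (\<And>s. s \<in> {-T..T} \<Longrightarrow> (\<gamma> has_vector_derivative f (\<gamma> s)) (at s within {-T..T})) \<Longrightarrow>
      t \<in> {-T..T} \<Longrightarrow> dist (\<gamma> t) x0 \<le> \<rho> \<bar>t\<bar>"
  shows "\<exists>\<gamma>. \<gamma> 0 = x0 \<and> (\<forall>t\<in>{-T..T}. (\<gamma> has_vector_derivative f (\<gamma> t)) (at t))"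
proof -
  define r where "r = \<bar>\<rho> T\<bar>"
  define K where "K = cball x0 (r + 1)"
  have K: "convex K" "closed K" "K \<noteq> {}" by (auto simp: K_def r_def)
  obtain L where "L-lipschitz_on K f" using lip unfolding K_def by blast
  then have "L-lipschitz_on UNIV (f \<circ> closest_point K)"
    using K by (rule lipschitz_on_comp_closest_point)
  \<comment> \<open>This truncated equation agrees with the true one as long as the solution stays in \<open>K\<close>.\<close>
  then have "\<exists>\<gamma>. \<gamma> 0 = x0 \<and> (\<forall>t. (\<gamma> has_vector_derivative (f \<circ> closest_point K) (\<gamma> t)) (at t))"
    by (rule lipschitz_ode_solution_exists)
  then obtain \<gamma> where \<gamma>0: "\<gamma> 0 = x0"
    and \<gamma>': "\<And>t. (\<gamma> has_vector_derivative f (closest_point K (\<gamma> t))) (at t)"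
    by auto
  have cont: "continuous_on S \<gamma>" for S
    using \<gamma>' has_vector_derivative_continuous continuous_at_imp_continuous_on by blast
  have solves: "(\<gamma> has_vector_derivative f (\<gamma> t)) (at t)" if "\<gamma> t \<in> K" for t
    using \<gamma>'[of t] closest_point_self[OF that] by simp
  have in_K: "\<gamma> s \<in> K"
    if "s \<in> {-t..t}" "\<forall>u\<in>{0..t}. max (dist (\<gamma> u) x0) (dist (\<gamma> (- u)) x0) \<le> r + 1" for s t
  proof -
    have "max (dist (\<gamma> \<bar>s\<bar>) x0) (dist (\<gamma> (- \<bar>s\<bar>)) x0) \<le> r + 1" using that by auto
    then show ?thesis by (cases "s \<ge> 0") (auto simp: K_def dist_commute)
  qed
  have "\<forall>t\<in>{0..T}. max (dist (\<gamma> t) x0) (dist (\<gamma> (- t)) x0) \<le> r"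
  proof (rule continuous_bootstrap[where R = "r + 1"])
    show "continuous_on {0..T} (\<lambda>t. max (dist (\<gamma> t) x0) (dist (\<gamma> (- t)) x0))"
      by (intro continuous_intros cont continuous_on_compose2[OF cont[of UNIV]]) auto
    fix t assume t: "t \<in> {0..T}" and bound: "\<forall>u\<in>{0..t}. max (dist (\<gamma> u) x0) (dist (\<gamma> (- u)) x0) \<le> r + 1"
    have sol: "(\<gamma> has_vector_derivative f (\<gamma> s)) (at s within {-t..t})" if "s \<in> {-t..t}" for s
      using solves[OF in_K[OF that bound]] by (rule has_vector_derivative_at_within)
    have "dist (\<gamma> s) x0 \<le> r" if "s \<in> {-t..t}" for s
    proof -
      have "dist (\<gamma> s) x0 \<le> \<rho> \<bar>s\<bar>" using growth[OF \<gamma>0 sol that] .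
      also have "\<dots> \<le> \<rho> T" using \<open>mono \<rho>\<close> that t by (auto intro: monoD)
      finally show ?thesis by (simp add: r_def)
    qed
    then show "max (dist (\<gamma> t) x0) (dist (\<gamma> (- t)) x0) \<le> r" using t by auto
  qed (auto simp: \<gamma>0 r_def)
  then have "\<gamma> t \<in> K" if "t \<in> {-T..T}" for t
    using in_K[of t T] that by force
  then show ?thesis using \<gamma>0 solves by blast
qed

lemma ode_solution_from_exhaustion:
  fixes f :: "'a::real_normed_vector \<Rightarrow> 'a"
  assumes loclip: "\<And>x. \<exists>r>0. \<exists>L. L-lipschitz_on (cball x r) f"
    and \<gamma>0: "\<And>n. \<gamma> n 0 = x0"
    and \<gamma>': "\<And>n t. t \<in> {-real n..real n} \<Longrightarrow> (\<gamma> n has_vector_derivative f (\<gamma> n t)) (at t)"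
  shows "\<exists>\<eta>. \<eta> 0 = x0 \<and> (\<forall>t. (\<eta> has_vector_derivative f (\<eta> t)) (at t))"
proof -
  have agree: "\<gamma> m t = \<gamma> n t" if "m \<le> n" "t \<in> {-real m..real m}" for m n t
  proof -
    have "\<forall>t\<in>{-real m..real m}. \<gamma> m t = \<gamma> n t"
    proof (rule ode_solutions_unique[OF loclip is_interval_cc, where a = 0])
      fix s assume s: "s \<in> {-real m..real m}"
      then show "(\<gamma> m has_vector_derivative f (\<gamma> m s)) (at s within {-real m..real m})"
        "(\<gamma> n has_vector_derivative f (\<gamma> n s)) (at s within {-real m..real m})"
        using \<open>m \<le> n\<close> by (auto intro!: has_vector_derivative_at_within \<gamma>')
    qed (auto simp: \<gamma>0)
    then show ?thesis using that by blast
  qed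
  define N where "N t = nat \<lceil>\<bar>t\<bar>\<rceil>" for t :: real
  define \<eta> where "\<eta> t = \<gamma> (N t) t" for t
  have "(\<eta> has_vector_derivative f (\<eta> t)) (at t)" for t
  proof -
    define n where "n = N t + 1"
    have "\<gamma> n s = \<eta> s" if "s \<in> ball t 1" for s
    proof -
      have "N s \<le> n" "s \<in> {-real (N s)..real (N s)}"
        using that by (auto simp: N_def n_def dist_real_def; linarith)+
      then show ?thesis unfolding \<eta>_def using agree by metis
    qed
    moreover have "(\<gamma> n has_vector_derivative f (\<gamma> n t)) (at t)"
      by (rule \<gamma>') (auto simp: n_def N_def; linarith)
    ultimately show ?thesis
      by (auto intro: has_vector_derivative_transform_within_open[of _ _ _ "ball t 1"])
  qed
  moreover have "\<eta> 0 = x0" by (simp add: \<eta>_def \<gamma>0)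
  ultimately show ?thesis by blast
qed

lemma ode_solution_if_growth_bounded:
  fixes f :: "'a::euclidean_space \<Rightarrow> 'a" and \<rho> :: "real \<Rightarrow> real"
  assumes lip: "\<And>c r. \<exists>L. L-lipschitz_on (cball c r) f"
    and "mono \<rho>"
    and growth: "\<And>T \<gamma> t. \<gamma> 0 = x0 \<Longrightarrow>
      (\<And>s. s \<in> {-T..T} \<Longrightarrow> (\<gamma> has_vector_derivative f (\<gamma> s)) (at s within {-T..T})) \<Longrightarrow>
      t \<in> {-T..T} \<Longrightarrow> dist (\<gamma> t) x0 \<le> \<rho> \<bar>t\<bar>"
  shows "\<exists>\<gamma>. \<gamma> 0 = x0 \<and> (\<forall>t. (\<gamma> has_vector_derivative f (\<gamma> t)) (at t))"
proof -
  have "\<exists>\<gamma>. \<gamma> 0 = x0 \<and> (\<forall>t\<in>{-T..T}. (\<gamma> has_vector_derivative f (\<gamma> t)) (at t))" for T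
    by (rule ode_solution_on_interval_if_growth_bounded[OF lip \<open>mono \<rho>\<close>]) (rule growth)
  then obtain \<gamma> where \<gamma>: "\<And>T. \<gamma> T 0 = x0 \<and> (\<forall>t\<in>{-T..T}. (\<gamma> T has_vector_derivative f (\<gamma> T t)) (at t))"
    by metis
  have "\<exists>r>0. \<exists>L. L-lipschitz_on (cball x r) f" for x
    using lip zero_less_one by blast
  then show ?thesis
    using \<gamma> by (intro ode_solution_from_exhaustion[of f "\<lambda>n. \<gamma> (real n)"]) auto
qed

section \<open>Smooth functions and gradients\<close>

lemma c_inf_on_differentiable: "c_inf_on S f \<Longrightarrow> x \<in> S \<Longrightarrow> f differentiable (at x)"
  by (erule c_inf_on.cases) auto

lemma c_inf_on_partial:
  "c_inf_on S f \<Longrightarrow> b \<in> Basis \<Longrightarrow> c_inf_on S (\<lambda>x. frechet_derivative f (at x) b)"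
  by (erule c_inf_on.cases) auto

lemma c_inf_on_continuous_on: "c_inf_on S f \<Longrightarrow> continuous_on S f"
  by (auto intro!: continuous_at_imp_continuous_on differentiable_imp_continuous_within
      dest: c_inf_on_differentiable)

lemma c_inf_on_const: "c_inf_on S (\<lambda>x. c)"
proof (coinduction arbitrary: c rule: c_inf_on.coinduct)
  case c_inf_on
  then show ?case by (auto simp: frechet_derivative_const)
qed

lemma c_inf_on_bounded_linear:
  assumes "bounded_linear l"
  shows "c_inf_on S l"
proof (rule c_inf_on.intros)
  show "\<forall>x\<in>S. l differentiable at x"
    using assms bounded_linear_imp_differentiable by blast
  have "frechet_derivative l (at x) = l" for x
    by (metis bounded_linear.has_derivative[OF assms has_derivative_ident] frechet_derivative_at)
  then show "\<forall>b\<in>Basis. c_inf_on S (\<lambda>x. frechet_derivative l (at x) b)"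
    by (simp add: c_inf_on_const)
qed

lemma c_inf_on_if_partials_bounded_linear:
  assumes "\<And>x. f differentiable (at x)"
    and "\<And>b. b \<in> Basis \<Longrightarrow> bounded_linear (\<lambda>x. frechet_derivative f (at x) b)"
  shows "c_inf_on S f"
  using assms by (intro c_inf_on.intros) (auto intro: c_inf_on_bounded_linear)

lemma c_inf_on_add:
  assumes "c_inf_on UNIV f" "c_inf_on UNIV g"
  shows "c_inf_on UNIV (\<lambda>x. f x + g x)"
  using assms
proof (coinduction arbitrary: f g rule: c_inf_on.coinduct)
  case (c_inf_on f g)
  have d: "f differentiable at x" "g differentiable at x" for x
    using c_inf_on c_inf_on_differentiable by blast+
  have "((\<lambda>x. f x + g x) has_derivative
      (\<lambda>v. frechet_derivative f (at x) v + frechet_derivative g (at x) v)) (at x)" for x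
    using d[of x] by (intro has_derivative_add) (simp_all add: frechet_derivative_works[symmetric])
  then have D: "frechet_derivative (\<lambda>x. f x + g x) (at x) =
      (\<lambda>v. frechet_derivative f (at x) v + frechet_derivative g (at x) v)" for x
    by (rule frechet_derivative_at[symmetric])
  show ?case
  proof (rule exI[of _ "\<lambda>x. f x + g x"], intro conjI refl ballI disjI1)
    show "(\<lambda>x. f x + g x) differentiable at x" for x
      using d by (rule differentiable_add)
    fix b :: 'a assume "b \<in> Basis"
    show "\<exists>f' g'. (\<lambda>x. frechet_derivative (\<lambda>x. f x + g x) (at x) b) = (\<lambda>x. f' x + g' x) \<and>
        c_inf_on UNIV f' \<and> c_inf_on UNIV g'"
    proof (rule exI[of _ "\<lambda>x. frechet_derivative f (at x) b"],
        rule exI[of _ "\<lambda>x. frechet_derivative g (at x) b"], intro conjI)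
    qed (use c_inf_on c_inf_on_partial \<open>b \<in> Basis\<close> in \<open>auto simp: D\<close>)
  qed
qed

lemma c_inf_on_comp_fst:
  fixes g :: "'a::euclidean_space \<Rightarrow> real"
  assumes "c_inf_on UNIV g"
  shows "c_inf_on UNIV (\<lambda>x::'a \<times> 'b::euclidean_space. g (fst x))"
  using assms
proof (coinduction arbitrary: g rule: c_inf_on.coinduct)
  case (c_inf_on g)
  have dg: "(g has_derivative frechet_derivative g (at y)) (at y)" for y
    using c_inf_on c_inf_on_differentiable frechet_derivative_works by blast
  have D: "((\<lambda>x::'a \<times> 'b. g (fst x)) has_derivative
      (\<lambda>v. frechet_derivative g (at (fst x)) (fst v))) (at x)" for x
    by (rule has_derivative_compose[OF has_derivative_fst[OF has_derivative_ident] dg[of "fst x"]])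
  have partial: "(\<lambda>x. frechet_derivative (\<lambda>x::'a \<times> 'b. g (fst x)) (at x) b) =
      (\<lambda>x. frechet_derivative g (at (fst x)) (fst b))" for b
    by (simp add: frechet_derivative_at[OF D, symmetric])
  show ?case
  proof (rule exI[of _ "\<lambda>x::'a \<times> 'b. g (fst x)"], intro conjI refl ballI)
    show "(\<lambda>x::'a \<times> 'b. g (fst x)) differentiable at x" for x
      using D differentiable_def by blast
    fix b :: "'a \<times> 'b" assume "b \<in> Basis"
    then consider "fst b \<in> Basis" | "fst b = 0"
      by (auto simp: in_Basis_prod_iff)
    then show "(\<exists>g'. (\<lambda>x. frechet_derivative (\<lambda>x::'a \<times> 'b. g (fst x)) (at x) b) = (\<lambda>x. g' (fst x)) \<and>
        c_inf_on UNIV g') \<or> c_inf_on UNIV (\<lambda>x. frechet_derivative (\<lambda>x::'a \<times> 'b. g (fst x)) (at x) b)"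
    proof cases
      case 1
      then show ?thesis using c_inf_on_partial[OF c_inf_on] by (auto simp: partial)
    next
      case 2
      have "frechet_derivative g (at y) 0 = 0" for y
        using dg has_derivative_linear linear_0 by blast
      then show ?thesis using 2 by (simp add: partial c_inf_on_const)
    qed
  qed
qed

lemma onorm_le_sum_Basis:
  fixes l :: "'a::euclidean_space \<Rightarrow> real"
  assumes "linear l"
  shows "onorm l \<le> (\<Sum>b\<in>Basis. \<bar>l b\<bar>)"
proof (rule onorm_le)
  fix h
  have "l h = (\<Sum>b\<in>Basis. (h \<bullet> b) * l b)"
    using Linear_Algebra.linear_componentwise[OF assms, where x = h and j = 1] by simp
  also have "\<bar>\<dots>\<bar> \<le> (\<Sum>b\<in>Basis. norm h * \<bar>l b\<bar>)"
    by (intro order_trans[OF sum_abs] sum_mono) (auto simp: abs_mult Basis_le_norm mult_right_mono)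
  also have "\<dots> = (\<Sum>b\<in>Basis. \<bar>l b\<bar>) * norm h" by (simp add: sum_distrib_left mult.commute)
  finally show "norm (l h) \<le> (\<Sum>b\<in>Basis. \<bar>l b\<bar>) * norm h" by simp
qed

lemma c_inf_on_lipschitz_on_cball:
  fixes g :: "'a::euclidean_space \<Rightarrow> real"
  assumes g: "c_inf_on UNIV g"
  shows "\<exists>L. L-lipschitz_on (cball c r) g"
proof -
  have dg: "(g has_derivative frechet_derivative g (at x)) (at x)" for x
    using c_inf_on_differentiable[OF g] frechet_derivative_works by blast
  have "\<exists>B. \<forall>x\<in>cball c r. \<bar>frechet_derivative g (at x) b\<bar> \<le> B" if "b \<in> Basis" for b
  proof -
    have "continuous_on (cball c r) (\<lambda>x. frechet_derivative g (at x) b)"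
      using c_inf_on_differentiable[OF c_inf_on_partial[OF g that]]
      by (intro differentiable_imp_continuous_on)
        (auto simp: differentiable_on_def intro: differentiable_at_withinI)
    then have "bounded ((\<lambda>x. frechet_derivative g (at x) b) ` cball c r)"
      by (intro compact_imp_bounded compact_continuous_image) auto
    then show ?thesis unfolding bounded_iff by auto
  qed
  then obtain B where B: "\<And>b x. b \<in> Basis \<Longrightarrow> x \<in> cball c r \<Longrightarrow> \<bar>frechet_derivative g (at x) b\<bar> \<le> B b"
    by metis
  define L where "L = (\<Sum>b\<in>Basis. \<bar>B b\<bar>)"
  have onorm: "onorm (frechet_derivative g (at x)) \<le> L" if x: "x \<in> cball c r" for x
  proof -
    have "onorm (frechet_derivative g (at x)) \<le> (\<Sum>b\<in>Basis. \<bar>frechet_derivative g (at x) b\<bar>)"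
      using dg has_derivative_linear by (blast intro: onorm_le_sum_Basis)
    also have "\<dots> \<le> L"
      unfolding L_def using B[OF _ x] by (intro sum_mono) fastforce
    finally show ?thesis .
  qed
  have "norm (g x - g y) \<le> L * norm (x - y)" if "x \<in> cball c r" "y \<in> cball c r" for x y
  proof (rule differentiable_bound[OF convex_cball _ onorm that])
    show "(g has_derivative frechet_derivative g (at z)) (at z within cball c r)" for z
      using dg has_derivative_at_withinI by blast
  qed
  then have "L-lipschitz_on (cball c r) g"
    by (intro lipschitz_onI) (auto simp: L_def dist_norm sum_nonneg)
  then show ?thesis by blast
qed

lemma frechet_derivative_eq_grad_inner:
  fixes W :: "real^'n \<Rightarrow> real"
  assumes "W differentiable at q"
  shows "frechet_derivative W (at q) h = grad W q \<bullet> h"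
proof -
  have lin: "linear (frechet_derivative W (at q))"
    using assms frechet_derivative_works has_derivative_linear by blast
  have "frechet_derivative W (at q) h = frechet_derivative W (at q) (\<Sum>i\<in>UNIV. h $ i *\<^sub>R axis i 1)"
    using basis_expansion[of h] by (simp add: scalar_mult_eq_scaleR)
  also have "\<dots> = (\<Sum>i\<in>UNIV. h $ i * frechet_derivative W (at q) (axis i 1))"
    by (simp add: linear_sum[OF lin] linear_scale[OF lin])
  finally show ?thesis by (simp add: grad_def inner_vec_def mult.commute)
qed

lemma has_derivative_grad:
  fixes W :: "real^'n \<Rightarrow> real"
  assumes "W differentiable at q"
  shows "(W has_derivative (\<lambda>h. grad W q \<bullet> h)) (at q)"
proof -
  have "(W has_derivative frechet_derivative W (at q)) (at q)"
    using assms frechet_derivative_works by blast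
  moreover have "frechet_derivative W (at q) = (\<lambda>h. grad W q \<bullet> h)"
    using frechet_derivative_eq_grad_inner[OF assms] by blast
  ultimately show ?thesis by simp
qed

lemma lipschitz_on_cball_grad:
  fixes W :: "real^'n \<Rightarrow> real"
  assumes "c_inf_on UNIV W"
  shows "\<exists>L. L-lipschitz_on (cball c r) (grad W)"
proof -
  have "c_inf_on UNIV (\<lambda>q. grad W q $ i)" for i
    unfolding grad_def using c_inf_on_partial[OF assms, of "axis i 1"] by (simp add: axis_in_Basis_iff)
  then have "\<forall>i. \<exists>L. L-lipschitz_on (cball c r) (\<lambda>q. grad W q $ i)"
    using c_inf_on_lipschitz_on_cball by blast
  then obtain L where L: "\<And>i. (L i)-lipschitz_on (cball c r) (\<lambda>q. grad W q $ i)"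
    by metis
  have "(\<Sum>i\<in>UNIV. L i)-lipschitz_on (cball c r) (grad W)"
  proof (rule lipschitz_onI)
    fix x y assume xy: "x \<in> cball c r" "y \<in> cball c r"
    have "dist (grad W x) (grad W y) \<le> (\<Sum>i\<in>UNIV. \<bar>(grad W x - grad W y) $ i\<bar>)"
      unfolding dist_norm by (rule norm_le_l1_cart)
    also have "\<dots> \<le> (\<Sum>i\<in>UNIV. L i * dist x y)"
      using lipschitz_onD[OF L xy] by (intro sum_mono) (simp add: dist_real_def)
    finally show "dist (grad W x) (grad W y) \<le> (\<Sum>i\<in>UNIV. L i) * dist x y"
      by (simp add: sum_distrib_right)
  qed (use lipschitz_on_nonneg[OF L] in \<open>simp add: sum_nonneg\<close>)
  then show ?thesis by blast
qed

section \<open>Mechanical Hamiltonians\<close>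

lemma mech_ham_apply: "mech_ham W x = (1/2) * (norm (snd x))\<^sup>2 + W (fst x)"
  by (cases x) (simp add: mech_ham_def)

lemma has_derivative_kinetic_energy:
  "((\<lambda>x::'a::real_inner \<times> 'b::real_inner. (1/2) * (norm (snd x))\<^sup>2) has_derivative (\<lambda>h. snd x \<bullet> snd h)) (at x)"
proof -
  have "((\<lambda>x::'a \<times> 'b. (1/2) * (snd x \<bullet> snd x)) has_derivative
      (\<lambda>h. (1/2) * (snd x \<bullet> snd h + snd h \<bullet> snd x))) (at x)"
    by (intro derivative_eq_intros) auto
  then show ?thesis by (simp add: power2_norm_eq_inner inner_commute)
qed

lemma has_derivative_mech_ham:
  fixes W :: "real^'n \<Rightarrow> real"
  assumes "\<And>q. W differentiable at q"
  shows "(mech_ham W has_derivative (\<lambda>h. grad W (fst x) \<bullet> fst h + snd x \<bullet> snd h)) (at x)"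
proof -
  have "((\<lambda>x::(real^'n) \<times> (real^'n). W (fst x)) has_derivative (\<lambda>h. grad W (fst x) \<bullet> fst h)) (at x)"
    by (rule has_derivative_compose[OF has_derivative_fst[OF has_derivative_ident]
          has_derivative_grad[OF assms]])
  from has_derivative_add[OF has_derivative_kinetic_energy this] show ?thesis
    by (simp add: mech_ham_apply[abs_def] add.commute)
qed

lemma frechet_derivative_mech_ham:
  fixes W :: "real^'n \<Rightarrow> real"
  assumes "\<And>q. W differentiable at q"
  shows "frechet_derivative (mech_ham W) (at x) = (\<lambda>h. grad W (fst x) \<bullet> fst h + snd x \<bullet> snd h)"
  by (rule frechet_derivative_at[OF has_derivative_mech_ham[OF assms], symmetric])

lemma ham_vf_mech_ham:
  fixes W :: "real^'n \<Rightarrow> real"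
  assumes "\<And>q. W differentiable at q"
  shows "ham_vf (mech_ham W) x = (snd x, - grad W (fst x))"
  unfolding ham_vf_def frechet_derivative_mech_ham[OF assms]
proof (rule the_equality)
  show "\<forall>Y. symp_form (snd x, - grad W (fst x)) Y = - (grad W (fst x) \<bullet> fst Y + snd x \<bullet> snd Y)"
    by (auto simp: symp_form_def inner_commute)
next
  fix X assume X: "\<forall>Y. symp_form X Y = - (grad W (fst x) \<bullet> fst Y + snd x \<bullet> snd Y)"
  \<comment> \<open>Testing against \<open>(a, 0)\<close> and \<open>(0, b)\<close> determines both components.\<close>
  have "(snd X + grad W (fst x)) \<bullet> a = 0" for a
    using X[rule_format, of "(a, 0)"] by (simp add: symp_form_def inner_add_left)
  from this[of "snd X + grad W (fst x)"] have "snd X = - grad W (fst x)"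
    by (simp add: eq_neg_iff_add_eq_0)
  moreover have "(fst X - snd x) \<bullet> b = 0" for b
    using X[rule_format, of "(0, b)"]
    by (simp add: symp_form_def inner_diff_left inner_diff_right inner_commute)
  from this[of "fst X - snd x"] have "fst X = snd x" by simp
  ultimately show "X = (snd x, - grad W (fst x))" by (simp add: prod_eq_iff)
qed

lemma lipschitz_on_cball_ham_vf_mech_ham:
  fixes W :: "real^'n \<Rightarrow> real"
  assumes W: "c_inf_on UNIV W"
  shows "\<exists>L. L-lipschitz_on (cball c r) (ham_vf (mech_ham W))"
proof -
  have dW: "\<And>q. W differentiable at q" using c_inf_on_differentiable[OF W] by auto
  obtain L where L: "L-lipschitz_on (cball (fst c) r) (grad W)" using lipschitz_on_cball_grad[OF W] by blast
  have L0: "L \<ge> 0" using L lipschitz_on_nonneg by blast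
  have "(1 + L)-lipschitz_on (cball c r) (ham_vf (mech_ham W))"
  proof (rule lipschitz_onI)
    fix x y assume xy: "x \<in> cball c r" "y \<in> cball c r"
    then have "fst x \<in> cball (fst c) r" "fst y \<in> cball (fst c) r"
      using dist_fst_le[of c x] dist_fst_le[of c y] by auto
    then have "norm (grad W (fst x) - grad W (fst y)) \<le> L * dist (fst x) (fst y)"
      using lipschitz_onD[OF L] by (simp add: dist_norm)
    also have "\<dots> \<le> L * dist x y" using dist_fst_le[of x y] L0 by (rule mult_left_mono)
    moreover have "dist (ham_vf (mech_ham W) x) (ham_vf (mech_ham W) y)
        \<le> norm (snd x - snd y) + norm (grad W (fst x) - grad W (fst y))"
      using norm_Pair_le[of "snd x - snd y" "- (grad W (fst x) - grad W (fst y))"]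
      by (simp add: ham_vf_mech_ham[OF dW] dist_norm norm_minus_commute)
    moreover have "norm (snd x - snd y) \<le> dist x y"
      using dist_snd_le[of x y] by (simp add: dist_norm)
    ultimately show "dist (ham_vf (mech_ham W) x) (ham_vf (mech_ham W) y) \<le> (1 + L) * dist x y"
      by (simp add: algebra_simps)
  qed (use L0 in simp)
  then show ?thesis by blast
qed

lemma c_inf_on_mech_ham:
  fixes W :: "real^'n \<Rightarrow> real"
  assumes "c_inf_on UNIV W"
  shows "c_inf_on UNIV (mech_ham W)"
proof -
  have "c_inf_on UNIV (\<lambda>x::(real^'n) \<times> (real^'n). (1/2) * (norm (snd x))\<^sup>2)"
  proof (rule c_inf_on_if_partials_bounded_linear)
    show "(\<lambda>x::(real^'n) \<times> (real^'n). (1/2) * (norm (snd x))\<^sup>2) differentiable at x" for x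
      using has_derivative_kinetic_energy differentiable_def by blast
    have "frechet_derivative (\<lambda>x::(real^'n) \<times> (real^'n). (1/2) * (norm (snd x))\<^sup>2) (at x) b = snd x \<bullet> snd b"
      for x b using frechet_derivative_at[OF has_derivative_kinetic_energy[of x]] by metis
    then show "bounded_linear (\<lambda>x. frechet_derivative (\<lambda>x::(real^'n) \<times> (real^'n). (1/2) * (norm (snd x))\<^sup>2) (at x) b)"
      for b by (simp add: bounded_linear_compose[OF bounded_linear_inner_left bounded_linear_snd])
  qed
  from c_inf_on_add[OF this c_inf_on_comp_fst[OF assms]] show ?thesis
    by (simp add: mech_ham_apply[abs_def])
qed

lemma c_inf_on_inner_fst_snd: "c_inf_on UNIV (\<lambda>x::(real^'n) \<times> (real^'n). fst x \<bullet> snd x)"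
proof (rule c_inf_on_if_partials_bounded_linear)
  have d: "((\<lambda>x::(real^'n) \<times> (real^'n). fst x \<bullet> snd x) has_derivative
      (\<lambda>h. fst x \<bullet> snd h + fst h \<bullet> snd x)) (at x)" for x
    by (intro derivative_eq_intros) auto
  then show "(\<lambda>x::(real^'n) \<times> (real^'n). fst x \<bullet> snd x) differentiable at x" for x
    using differentiable_def by blast
  have "frechet_derivative (\<lambda>x::(real^'n) \<times> (real^'n). fst x \<bullet> snd x) (at x) b = fst x \<bullet> snd b + fst b \<bullet> snd x"
    for x b by (simp add: frechet_derivative_at[OF d, symmetric])
  then show "bounded_linear (\<lambda>x. frechet_derivative (\<lambda>x::(real^'n) \<times> (real^'n). fst x \<bullet> snd x) (at x) b)" for b
    by (simp add: bounded_linear_add bounded_linear_compose[OF bounded_linear_inner_left bounded_linear_fst]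
        bounded_linear_compose[OF bounded_linear_inner_right bounded_linear_snd])
qed

lemma mech_ham_conserved:
  fixes W :: "real^'n \<Rightarrow> real" and \<gamma> :: "real \<Rightarrow> (real^'n) \<times> (real^'n)"
  assumes dW: "\<And>q. W differentiable at q"
    and J: "convex J" "s \<in> J" "t \<in> J"
    and sol: "\<And>u. u \<in> J \<Longrightarrow> (\<gamma> has_vector_derivative ham_vf (mech_ham W) (\<gamma> u)) (at u within J)"
  shows "mech_ham W (\<gamma> t) = mech_ham W (\<gamma> s)"
proof -
  have "((\<lambda>u. mech_ham W (\<gamma> u)) has_derivative (\<lambda>h. 0)) (at u within J)" if "u \<in> J" for u
  proof -
    have "(\<gamma> has_derivative (\<lambda>h. h *\<^sub>R ham_vf (mech_ham W) (\<gamma> u))) (at u within J)"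
      using sol[OF that] by (simp add: has_vector_derivative_def)
    from has_derivative_compose[OF this has_derivative_mech_ham[OF dW]] show ?thesis
      by (simp add: ham_vf_mech_ham[OF dW] inner_commute)
  qed
  then have "\<exists>c. \<forall>u\<in>J. mech_ham W (\<gamma> u) = c"
    by (rule has_derivative_zero_constant[OF J(1)])
  then show ?thesis using J by auto
qed

lemma norm_snd_le_if_mech_ham_le:
  assumes "\<And>q. m \<le> W q" and "mech_ham W x \<le> e"
  shows "norm (snd x) \<le> sqrt (2 * max 0 (e - m))"
proof (rule real_le_rsqrt)
  have "(norm (snd x))\<^sup>2 = 2 * (mech_ham W x - W (fst x))" by (simp add: mech_ham_apply)
  also have "\<dots> \<le> 2 * (e - m)" using assms(1)[of "fst x"] assms(2) by simp
  also have "\<dots> \<le> 2 * max 0 (e - m)" by (intro mult_left_mono) auto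
  finally show "(norm (snd x))\<^sup>2 \<le> 2 * max 0 (e - m)" .
qed

lemma dist_mech_ham_solution_le:
  fixes W :: "real^'n \<Rightarrow> real"
  assumes dW: "\<And>q. W differentiable at q" and m: "\<And>q. m \<le> W q"
    and \<gamma>0: "\<gamma> 0 = x0"
    and sol: "\<And>s. s \<in> {-T..T} \<Longrightarrow> (\<gamma> has_vector_derivative ham_vf (mech_ham W) (\<gamma> s)) (at s within {-T..T})"
    and t: "t \<in> {-T..T}"
  shows "dist (\<gamma> t) x0 \<le> sqrt (2 * max 0 (mech_ham W x0 - m)) * (\<bar>t\<bar> + 2)"
proof -
  define P where "P = sqrt (2 * max 0 (mech_ham W x0 - m))"
  have "0 \<in> {-T..T}" using t by simp
  then have "mech_ham W (\<gamma> s) = mech_ham W x0" if "s \<in> {-T..T}" for s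
    using mech_ham_conserved[OF dW convex_real_interval(5) \<open>0 \<in> {-T..T}\<close> that sol] \<gamma>0 by simp
  then have p: "norm (snd (\<gamma> s)) \<le> P" if "s \<in> {-T..T}" for s
    using norm_snd_le_if_mech_ham_le[of m W "\<gamma> s" "mech_ham W x0", OF m] that
    by (simp add: P_def)
  \<comment> \<open>The position moves with speed \<open>|p| \<le> P\<close>.\<close>
  have "norm (fst (\<gamma> t) - fst (\<gamma> 0)) \<le> P * norm (t - 0)"
  proof (rule differentiable_bound[OF convex_real_interval(5) _ _ t \<open>0 \<in> {-T..T}\<close>])
    fix s assume s: "s \<in> {-T..T}"
    have "(\<gamma> has_derivative (\<lambda>h. h *\<^sub>R ham_vf (mech_ham W) (\<gamma> s))) (at s within {-T..T})"
      using sol[OF s] by (simp add: has_vector_derivative_def)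
    then show "((\<lambda>s. fst (\<gamma> s)) has_derivative (\<lambda>h. h *\<^sub>R snd (\<gamma> s))) (at s within {-T..T})"
      using has_derivative_fst by (fastforce simp: ham_vf_mech_ham[OF dW])
    show "onorm (\<lambda>h::real. h *\<^sub>R snd (\<gamma> s)) \<le> P"
      using p[OF s] by (simp add: onorm_scaleR_left[OF bounded_linear_ident] onorm_id)
  qed
  moreover have "norm (snd (\<gamma> t) - snd x0) \<le> P + P"
    using norm_triangle_ineq4[of "snd (\<gamma> t)" "snd x0"] p[OF t] p[OF \<open>0 \<in> {-T..T}\<close>] \<gamma>0 by simp
  moreover have "dist (\<gamma> t) x0 \<le> norm (fst (\<gamma> t) - fst x0) + norm (snd (\<gamma> t) - snd x0)"
    using norm_Pair_le[of "fst (\<gamma> t) - fst x0" "snd (\<gamma> t) - snd x0"]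
    by (metis dist_norm fst_diff snd_diff prod.collapse)
  ultimately show ?thesis using \<gamma>0 by (simp add: P_def algebra_simps)
qed

lemma frechet_derivative_mech_ham_nonzero:
  fixes W :: "real^'n \<Rightarrow> real"
  assumes dW: "\<And>q. W differentiable at q" and "\<not> critical_value W E" and "mech_ham W x = E"
  shows "frechet_derivative (mech_ham W) (at x) \<noteq> (\<lambda>_. 0)"
proof
  assume "frechet_derivative (mech_ham W) (at x) = (\<lambda>_. 0)"
  then have "(\<lambda>h. grad W (fst x) \<bullet> fst h + snd x \<bullet> snd h) = (\<lambda>_. 0)"
    by (simp add: frechet_derivative_mech_ham[OF dW])
  then have D: "grad W (fst x) \<bullet> fst h + snd x \<bullet> snd h = 0" for h
    by (rule fun_cong)
  have "snd x = 0" using D[of "(0, snd x)"] by simp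
  moreover have "grad W (fst x) = 0" using D[of "(grad W (fst x), 0)"] by simp
  ultimately show False
    using assms(2,3) by (auto simp: critical_value_def mech_ham_apply)
qed

lemma compact_sublevel_mech_ham_Times:
  fixes W :: "real^'n \<Rightarrow> real"
  assumes "continuous_on UNIV W" and "bdd_below (range W)" and "compact S"
  shows "compact ({x. mech_ham W x \<le> E} \<inter> (S \<times> UNIV))"
proof -
  have "continuous_on UNIV (mech_ham W)"
    unfolding mech_ham_apply[abs_def]
    by (intro continuous_intros continuous_on_compose2[OF assms(1)]) auto
  then have "closed ({x. mech_ham W x \<le> E} \<inter> (S \<times> UNIV))"
    using closed_Collect_le[OF _ continuous_on_const] compact_imp_closed[OF assms(3)]
    by (intro closed_Int closed_Times) auto
  moreover obtain m where m: "\<And>q. m \<le> W q" using assms(2) by (auto simp: bdd_below_def)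
  obtain B where B: "\<And>q. q \<in> S \<Longrightarrow> norm q \<le> B"
    using compact_imp_bounded[OF assms(3)] by (auto simp: bounded_iff)
  have "norm x \<le> B + sqrt (2 * max 0 (E - m))" if x: "x \<in> {x. mech_ham W x \<le> E} \<inter> (S \<times> UNIV)" for x
  proof -
    have "norm (fst x) \<le> B" "norm (snd x) \<le> sqrt (2 * max 0 (E - m))"
      using x B norm_snd_le_if_mech_ham_le[of m W x E, OF m] by (auto simp: mem_Times_iff)
    then show ?thesis using norm_Pair_le[of "fst x" "snd x"] by simp
  qed
  then have "bounded ({x. mech_ham W x \<le> E} \<inter> (S \<times> UNIV))"
    unfolding bounded_iff by blast
  ultimately show ?thesis using compact_eq_bounded_closed by blast
qed

lemma supp_comp_fst:
  fixes v :: "'a::topological_space \<Rightarrow> real"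
  shows "supp (\<lambda>x::'a \<times> 'b::topological_space. v (fst x)) = supp v \<times> UNIV"
proof -
  have "{x::'a \<times> 'b. v (fst x) \<noteq> 0} = {q. v q \<noteq> 0} \<times> UNIV" by auto
  then show ?thesis by (simp only: supp_def closure_Times closure_UNIV)
qed

section \<open>The Hamiltonian flow\<close>

locale mechanical_system =
  fixes W :: "real^'n \<Rightarrow> real"
  assumes c_inf_W: "c_inf_on UNIV W" and bdd_below_W: "bdd_below (range W)"
begin

abbreviation X :: "(real^'n) \<times> (real^'n) \<Rightarrow> (real^'n) \<times> (real^'n)" where
  "X \<equiv> ham_vf (mech_ham W)"

lemma differentiable_W: "W differentiable at q"
  using c_inf_on_differentiable[OF c_inf_W] by simp

lemma integral_curve_exists: "\<exists>\<gamma>. integral_curve X \<gamma> x"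
proof -
  obtain m where m: "\<And>q. m \<le> W q" using bdd_below_W by (auto simp: bdd_below_def)
  define P where "P = sqrt (2 * max 0 (mech_ham W x - m))"
  have "mono (\<lambda>s. P * (s + 2))" by (auto intro!: monoI mult_left_mono simp: P_def)
  have "\<exists>\<gamma>. \<gamma> 0 = x \<and> (\<forall>t. (\<gamma> has_vector_derivative X (\<gamma> t)) (at t))"
  proof (rule ode_solution_if_growth_bounded[OF lipschitz_on_cball_ham_vf_mech_ham[OF c_inf_W] \<open>mono _\<close>])
    fix T \<gamma> t assume "\<gamma> 0 = x"
      "\<And>s. s \<in> {-T..T} \<Longrightarrow> (\<gamma> has_vector_derivative X (\<gamma> s)) (at s within {-T..T})" "t \<in> {-T..T}"
    then show "dist (\<gamma> t) x \<le> P * (\<bar>t\<bar> + 2)"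
      unfolding P_def by (rule dist_mech_ham_solution_le[OF differentiable_W m])
  qed
  then show ?thesis by (simp add: integral_curve_def)
qed

lemma integral_curve_unique:
  assumes "integral_curve X \<gamma>1 x" "integral_curve X \<gamma>2 x"
  shows "\<gamma>1 = \<gamma>2"
proof -
  have "\<exists>r>0. \<exists>L. L-lipschitz_on (cball y r) X" for y
    using lipschitz_on_cball_ham_vf_mech_ham[OF c_inf_W] zero_less_one by blast
  then have "\<forall>t\<in>UNIV. \<gamma>1 t = \<gamma>2 t"
    by (rule ode_solutions_unique[where a = 0]) (use assms in \<open>auto simp: integral_curve_def\<close>)
  then show ?thesis by auto
qed

lemma integral_curve_flow: "integral_curve X (\<lambda>t. flow X t x) x"
proof -
  have "\<exists>!\<gamma>. integral_curve X \<gamma> x" using integral_curve_exists integral_curve_unique by blast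
  then show ?thesis unfolding flow_def by (rule theI')
qed

lemma flow_eqI: "integral_curve X \<gamma> x \<Longrightarrow> flow X t x = \<gamma> t"
  using integral_curve_flow integral_curve_unique by metis

lemma flow_0 [simp]: "flow X 0 x = x"
  using integral_curve_flow unfolding integral_curve_def by blast

lemma has_vector_derivative_flow: "((\<lambda>t. flow X t x) has_vector_derivative X (flow X t x)) (at t)"
  using integral_curve_flow unfolding integral_curve_def by blast

lemma continuous_on_flow: "continuous_on S (\<lambda>t. flow X t x)"
  using has_vector_derivative_flow has_vector_derivative_continuous continuous_at_imp_continuous_on by blast

lemma mech_ham_flow [simp]: "mech_ham W (flow X t x) = mech_ham W x"
proof -
  have "mech_ham W (flow X t x) = mech_ham W (flow X 0 x)"
    by (rule mech_ham_conserved[OF differentiable_W convex_UNIV]) (auto intro: has_vector_derivative_flow)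
  then show ?thesis by simp
qed

lemma flow_flow: "flow X s (flow X u x) = flow X (s + u) x"
proof (rule flow_eqI)
  have "((\<lambda>s. flow X (s + u) x) has_vector_derivative X (flow X (s + u) x)) (at s)" for s
  proof -
    have "((\<lambda>s. s + u) has_vector_derivative 1) (at s)" by (auto intro!: derivative_eq_intros)
    from vector_diff_chain_at[OF this has_vector_derivative_flow] show ?thesis by (simp add: o_def)
  qed
  then show "integral_curve X (\<lambda>s. flow X (s + u) x) (flow X u x)"
    by (simp add: integral_curve_def)
qed

lemma has_real_derivative_dilation:
  assumes "(\<gamma> has_vector_derivative X (\<gamma> t)) (at t)"
  shows "((\<lambda>s. fst (\<gamma> s) \<bullet> snd (\<gamma> s)) has_real_derivative
           (norm (snd (\<gamma> t)))\<^sup>2 - fst (\<gamma> t) \<bullet> grad W (fst (\<gamma> t))) (at t)"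
proof -
  have "(\<gamma> has_derivative (\<lambda>h. h *\<^sub>R X (\<gamma> t))) (at t)"
    using assms by (simp add: has_vector_derivative_def)
  then have "((\<lambda>s. fst (\<gamma> s) \<bullet> snd (\<gamma> s)) has_derivative
      (\<lambda>h. fst (\<gamma> t) \<bullet> snd (h *\<^sub>R X (\<gamma> t)) + fst (h *\<^sub>R X (\<gamma> t)) \<bullet> snd (\<gamma> t))) (at t)"
    by (auto intro!: derivative_eq_intros)
  moreover have "(\<lambda>h. fst (\<gamma> t) \<bullet> snd (h *\<^sub>R X (\<gamma> t)) + fst (h *\<^sub>R X (\<gamma> t)) \<bullet> snd (\<gamma> t)) =
      (\<lambda>h. ((norm (snd (\<gamma> t)))\<^sup>2 - fst (\<gamma> t) \<bullet> grad W (fst (\<gamma> t))) * h)"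
    by (auto simp: ham_vf_mech_ham[OF differentiable_W] power2_norm_eq_inner algebra_simps)
  ultimately show ?thesis by (simp add: has_field_derivative_def)
qed

end

section \<open>The virial estimate\<close>

lemma inner_eq_if_differentials_dependent:
  fixes q p g :: "'a::real_inner" and c0 c1 :: real
  assumes dep: "\<And>a b. c0 * (g \<bullet> a + p \<bullet> b) + c1 * (q \<bullet> b + a \<bullet> p) = 0"
    and nontrivial: "c0 \<noteq> 0 \<or> c1 \<noteq> 0"
  shows "p \<bullet> p = q \<bullet> g"
proof -
  define u where "u = c0 *\<^sub>R g + c1 *\<^sub>R p"
  define w where "w = c0 *\<^sub>R p + c1 *\<^sub>R q"
  \<comment> \<open>Testing the dependence against \<open>(u, w)\<close> yields \<open>|u|\<^sup>2 + |w|\<^sup>2 = 0\<close>.\<close>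
  have "u \<bullet> u + w \<bullet> w = c0 * (g \<bullet> u + p \<bullet> w) + c1 * (q \<bullet> w + u \<bullet> p)"
    by (simp add: u_def w_def inner_add_left inner_commute algebra_simps)
  then have "u \<bullet> u + w \<bullet> w = 0" using dep by simp
  then have "u = 0" "w = 0" by (simp_all add: add_nonneg_eq_0_iff)
  then have "q \<bullet> (c0 *\<^sub>R g + c1 *\<^sub>R p) = 0" "p \<bullet> (c0 *\<^sub>R p + c1 *\<^sub>R q) = 0"
    by (simp_all add: u_def w_def)
  then have "c0 * (q \<bullet> g) + c1 * (q \<bullet> p) = 0" "c0 * (p \<bullet> p) + c1 * (q \<bullet> p) = 0"
    by (simp_all add: inner_add_right inner_commute)
  then have "c0 * (p \<bullet> p - q \<bullet> g) = 0" unfolding right_diff_distrib by linarith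
  moreover have "p = 0" "q = 0" if "c0 = 0"
    using \<open>u = 0\<close> \<open>w = 0\<close> that nontrivial by (simp_all add: u_def w_def)
  ultimately show ?thesis by fastforce
qed

locale virial_energy = mechanical_system v0 for v0 :: "real^'n \<Rightarrow> real" +
  fixes E :: real
  assumes bdd_above_virial: "bdd_above (range (\<lambda>q. v0 q + (1/2) * (q \<bullet> grad v0 q)))"
    and virial_less_energy: "(SUP q. v0 q + (1/2) * (q \<bullet> grad v0 q)) < E"
begin

definition virial_gap :: real where
  "virial_gap = E - (SUP q. v0 q + (1/2) * (q \<bullet> grad v0 q))"

lemma virial_gap_pos: "virial_gap > 0"
  using virial_less_energy by (simp add: virial_gap_def)

lemma dilation_rate_ge:
  assumes "mech_ham v0 x = E"
  shows "2 * virial_gap \<le> (norm (snd x))\<^sup>2 - fst x \<bullet> grad v0 (fst x)"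
proof -
  have "v0 (fst x) + (1/2) * (fst x \<bullet> grad v0 (fst x)) \<le> (SUP q. v0 q + (1/2) * (q \<bullet> grad v0 q))"
    by (rule cSUP_upper[OF UNIV_I bdd_above_virial])
  moreover have "(norm (snd x))\<^sup>2 = 2 * (E - v0 (fst x))" using assms by (simp add: mech_ham_apply)
  ultimately show ?thesis by (simp add: virial_gap_def)
qed

abbreviation dilation_along :: "(real^'n) \<times> (real^'n) \<Rightarrow> real \<Rightarrow> real" where
  "dilation_along x t \<equiv> fst (flow X t x) \<bullet> snd (flow X t x)"

lemma dilation_along_increases:
  assumes x: "mech_ham v0 x = E" and "s \<le> t"
  shows "dilation_along x s + 2 * virial_gap * (t - s) \<le> dilation_along x t"
proof -
  have "((\<lambda>t. dilation_along x t - 2 * virial_gap * t) has_real_derivative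
      ((norm (snd (flow X u x)))\<^sup>2 - fst (flow X u x) \<bullet> grad v0 (fst (flow X u x))) - 2 * virial_gap) (at u)"
    for u
    by (intro DERIV_diff has_real_derivative_dilation has_vector_derivative_flow)
      (auto intro!: derivative_eq_intros)
  moreover have "2 * virial_gap \<le> (norm (snd (flow X u x)))\<^sup>2 - fst (flow X u x) \<bullet> grad v0 (fst (flow X u x))"
    for u using dilation_rate_ge x by simp
  ultimately have "dilation_along x s - 2 * virial_gap * s \<le> dilation_along x t - 2 * virial_gap * t"
    by (intro DERIV_nonneg_imp_nondecreasing[OF \<open>s \<le> t\<close>]) force
  then show ?thesis by (simp add: algebra_simps)
qed

lemma dilation_along_strict_mono:
  assumes "mech_ham v0 x = E"
  shows "strict_mono (dilation_along x)"
proof (rule strict_monoI)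
  fix s t :: real assume "s < t"
  then have "0 < 2 * virial_gap * (t - s)" using virial_gap_pos by simp
  then show "dilation_along x s < dilation_along x t"
    using dilation_along_increases[OF assms less_imp_le[OF \<open>s < t\<close>]] by linarith
qed

lemma continuous_on_dilation_along: "continuous_on S (dilation_along x)"
  by (intro continuous_intros continuous_on_flow)

lemma flow_leaves_compact:
  assumes K: "compact K" "K \<subseteq> {x. mech_ham v0 x = E}"
  shows "\<exists>T>0. \<forall>x\<in>K. \<forall>t. T \<le> \<bar>t\<bar> \<longrightarrow> flow X t x \<notin> K"
proof -
  have "bounded ((\<lambda>x. fst x \<bullet> snd x) ` K)"
    by (intro compact_imp_bounded compact_continuous_image K(1) continuous_intros)
  then obtain B where B: "\<And>x. x \<in> K \<Longrightarrow> \<bar>fst x \<bullet> snd x\<bar> \<le> B"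
    unfolding bounded_iff by auto
  define T where "T = (\<bar>B\<bar> + 1) / virial_gap"
  show ?thesis
  proof (intro exI[of _ T] conjI ballI allI impI notI)
    show "T > 0" using virial_gap_pos by (simp add: T_def add_nonneg_pos)
  next
    fix x t assume x: "x \<in> K" and t: "T \<le> \<bar>t\<bar>" and "flow X t x \<in> K"
    then have "\<bar>dilation_along x t\<bar> \<le> B" "\<bar>dilation_along x 0\<bar> \<le> B" using B by auto
    moreover have "2 * virial_gap * \<bar>t\<bar> \<le> \<bar>dilation_along x t - dilation_along x 0\<bar>"
    proof (cases "t \<ge> 0")
      case True
      then show ?thesis using dilation_along_increases[of x 0 t] x K(2) by auto
    next
      case False
      then show ?thesis using dilation_along_increases[of x t 0] x K(2) by auto
    qed
    moreover have "2 * virial_gap * T = 2 * \<bar>B\<bar> + 2" using virial_gap_pos by (simp add: T_def)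
    moreover have "2 * virial_gap * T \<le> 2 * virial_gap * \<bar>t\<bar>" using t virial_gap_pos by simp
    ultimately show False by (smt (verit))
  qed
qed

abbreviation dilation_section :: "real \<Rightarrow> ((real^'n) \<times> (real^'n)) set" where
  "dilation_section R \<equiv> {(q, p). mech_ham v0 (q, p) = E \<and> q \<bullet> p = R}"

lemma mem_dilation_section: "x \<in> dilation_section R \<longleftrightarrow> mech_ham v0 x = E \<and> fst x \<bullet> snd x = R"
  by (cases x) auto

lemma dilation_along_hits:
  assumes x: "mech_ham v0 x = E"
  shows "\<exists>s. dilation_along x s = R"
proof -
  define d where "d = (R - dilation_along x 0) / (2 * virial_gap)"
  have "2 * virial_gap * d = R - dilation_along x 0" using virial_gap_pos by (simp add: d_def)
  moreover have "2 * virial_gap * min 0 d \<le> 2 * virial_gap * d"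
    "2 * virial_gap * d \<le> 2 * virial_gap * max 0 d"
    using virial_gap_pos by (simp_all add: mult_left_mono)
  ultimately have "2 * virial_gap * min 0 d \<le> R - dilation_along x 0"
    "R - dilation_along x 0 \<le> 2 * virial_gap * max 0 d"
    by simp_all
  then have "dilation_along x (min 0 d) \<le> R" "R \<le> dilation_along x (max 0 d)"
    using dilation_along_increases[OF x, of "min 0 d" 0] dilation_along_increases[OF x, of 0 "max 0 d"]
    by simp_all
  moreover have "min 0 d \<le> max 0 d" by simp
  ultimately show ?thesis using IVT'[OF _ _ _ continuous_on_dilation_along] by blast
qed

lemma unique_flow_from_dilation_section:
  assumes x: "mech_ham v0 x = E"
  shows "\<exists>!zt. fst zt \<in> dilation_section R \<and> x = flow X (snd zt) (fst zt)"
proof -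
  obtain s where s: "dilation_along x s = R" using dilation_along_hits[OF x] by blast
  show ?thesis
  proof (rule ex1I[of _ "(flow X s x, - s)"])
    have "flow X s x \<in> dilation_section R"
      unfolding mem_dilation_section using s x by simp
    moreover have "flow X (- s) (flow X s x) = x" by (simp add: flow_flow)
    ultimately show "fst (flow X s x, - s) \<in> dilation_section R \<and>
        x = flow X (snd (flow X s x, - s)) (fst (flow X s x, - s))"
      by simp
  next
    fix zt assume zt: "fst zt \<in> dilation_section R \<and> x = flow X (snd zt) (fst zt)"
    then have flow_back: "flow X (- snd zt) x = fst zt"
      using flow_flow[of "- snd zt" "snd zt" "fst zt"] by simp
    have "fst (fst zt) \<bullet> snd (fst zt) = R" using zt unfolding mem_dilation_section by blast
    then have "dilation_along x (- snd zt) = dilation_along x s" using flow_back s by simp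
    then have "- snd zt = s"
      by (rule inj_onD[OF strict_mono_imp_inj_on[OF dilation_along_strict_mono[OF x], where A = UNIV]])
        simp_all
    then show "zt = (flow X s x, - s)"
      using flow_back by (auto simp: prod_eq_iff)
  qed
qed

lemma ham_vf_not_tangent_dilation_section:
  assumes x: "x \<in> dilation_section R"
  shows "X x \<notin> tangent_space (dilation_section R) x"
proof
  assume "X x \<in> tangent_space (dilation_section R) x"
  then obtain \<gamma> e where e: "e > 0" and "\<gamma> 0 = x" and \<gamma>: "\<gamma> ` {-e<..<e} \<subseteq> dilation_section R"
    and "(\<gamma> has_vector_derivative X x) (at 0)"
    unfolding tangent_space_def by blast
  define D where "D = (norm (snd x))\<^sup>2 - fst x \<bullet> grad v0 (fst x)"
  \<comment> \<open>Along a curve in the section \<open>q \<bullet> p\<close> is constant, but along \<open>X\<close> it grows at rate \<open>D > 0\<close>.\<close>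
  have grows: "((\<lambda>s. fst (\<gamma> s) \<bullet> snd (\<gamma> s)) has_derivative (\<lambda>h. D * h)) (at 0)"
    using has_real_derivative_dilation[of \<gamma> 0] \<open>\<gamma> 0 = x\<close> \<open>(\<gamma> has_vector_derivative X x) (at 0)\<close>
    by (simp add: D_def has_field_derivative_def)
  have "((\<lambda>s. R) has_derivative (\<lambda>h. 0)) (at 0)" by (rule has_derivative_const)
  then have stays: "((\<lambda>s. fst (\<gamma> s) \<bullet> snd (\<gamma> s)) has_derivative (\<lambda>h. 0)) (at 0)"
  proof (rule has_derivative_transform_within_open[of _ _ _ _ "{-e<..<e}"])
    show "R = fst (\<gamma> s) \<bullet> snd (\<gamma> s)" if "s \<in> {-e<..<e}" for s
    proof -
      have "\<gamma> s \<in> dilation_section R" using subsetD[OF \<gamma> imageI[OF that]] .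
      then show ?thesis unfolding mem_dilation_section by simp
    qed
  qed (use e in auto)
  have "D = 0" using fun_cong[OF has_derivative_unique[OF grows stays], of 1] by simp
  moreover have "D > 0"
    using dilation_rate_ge[of x] x virial_gap_pos unfolding mem_dilation_section D_def by simp
  ultimately show False by simp
qed

lemma smooth_submanifold_dilation_section:
  "smooth_submanifold (dilation_section R) (2 * CARD('n) - 2)"
proof -
  define F where "F i = (if i = 0 then (\<lambda>x. mech_ham v0 x - E) else (\<lambda>x. fst x \<bullet> snd x - R))"
    for i :: nat
  have two: "DIM((real^'n) \<times> (real^'n)) - (2 * CARD('n) - 2) = 2"
    using zero_less_card_finite[where 'a='n] by simp
  have all2: "(\<forall>i<2. P i) \<longleftrightarrow> P 0 \<and> P 1" for P :: "nat \<Rightarrow> bool"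
    by (auto simp: less_2_cases_iff)
  have "c_inf_on UNIV (\<lambda>x. mech_ham v0 x + - E)"
    "c_inf_on UNIV (\<lambda>x::(real^'n) \<times> (real^'n). fst x \<bullet> snd x + - R)"
    by (intro c_inf_on_add c_inf_on_mech_ham c_inf_W c_inf_on_inner_fst_snd c_inf_on_const)+
  then have smooth: "\<forall>i<2. c_inf_on UNIV (F i)" by (simp add: all2 F_def)
  have zero_set: "dilation_section R \<inter> UNIV = {y \<in> UNIV. \<forall>i<2. F i y = 0}"
    by (auto simp: all2 F_def mem_dilation_section)
  have d0: "((\<lambda>x. mech_ham v0 x - E) has_derivative (\<lambda>h. grad v0 (fst y) \<bullet> fst h + snd y \<bullet> snd h)) (at y)"
    for y using has_derivative_diff[OF has_derivative_mech_ham[OF differentiable_W] has_derivative_const]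
    by simp
  have d1: "((\<lambda>x::(real^'n) \<times> (real^'n). fst x \<bullet> snd x - R) has_derivative
      (\<lambda>h. fst y \<bullet> snd h + fst h \<bullet> snd y)) (at y)"
    for y by (auto intro!: derivative_eq_intros)
  have derivs: "frechet_derivative (F 0) (at y) w = grad v0 (fst y) \<bullet> fst w + snd y \<bullet> snd w"
    "frechet_derivative (F (Suc 0)) (at y) w = fst y \<bullet> snd w + fst w \<bullet> snd y" for y w
    by (simp_all add: F_def frechet_derivative_at[OF d0, symmetric] frechet_derivative_at[OF d1, symmetric])
  \<comment> \<open>Dependent differentials would force \<open>|p|\<^sup>2 = q \<bullet> \<nabla>v0 q\<close>, i.e. a vanishing growth rate of \<open>q \<bullet> p\<close>.\<close>
  have independent: "\<forall>i<2. c i = 0"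
    if y: "y \<in> dilation_section R" and dep: "\<forall>w. (\<Sum>i<2. c i * frechet_derivative (F i) (at y) w) = 0" for y c
  proof (rule ccontr)
    assume "\<not> (\<forall>i<2. c i = 0)"
    then have "c 0 \<noteq> 0 \<or> c 1 \<noteq> 0" by (simp add: all2)
    moreover have "c 0 * (grad v0 (fst y) \<bullet> a + snd y \<bullet> b) + c 1 * (fst y \<bullet> b + a \<bullet> snd y) = 0" for a b
      using dep[rule_format, of "(a, b)"] by (simp add: numeral_2_eq_2 derivs)
    ultimately have "snd y \<bullet> snd y = fst y \<bullet> grad v0 (fst y)"
      by (intro inner_eq_if_differentials_dependent)
    then show False
      using dilation_rate_ge[of y] y virial_gap_pos unfolding mem_dilation_section
      by (simp add: power2_norm_eq_inner)
  qed
  show ?thesis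
    unfolding smooth_submanifold_def two
    using smooth zero_set independent by (intro conjI ballI exI[of _ UNIV] exI[of _ F]) auto
qed

end

section \<open>Assumptions 1 and 2\<close>

lemma bounded_range_if_compact_supp:
  fixes v :: "'a::topological_space \<Rightarrow> real"
  assumes "continuous_on UNIV v" and "compact (supp v)"
  shows "bounded (range v)"
proof -
  have "range v \<subseteq> insert 0 (v ` supp v)"
    using closure_subset by (fastforce simp: supp_def)
  moreover have "compact (v ` supp v)"
    using assms by (intro compact_continuous_image continuous_on_subset[OF assms(1)]) auto
  ultimately show ?thesis by (meson bounded_insert bounded_subset compact_imp_bounded)
qed

lemma bdd_below_range_add_compact_supp:
  fixes v0 v :: "'a::topological_space \<Rightarrow> real"
  assumes "bdd_below (range v0)" and "continuous_on UNIV v" and "compact (supp v)"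
  shows "bdd_below (range (\<lambda>q. v0 q + v q))"
proof -
  obtain m where m: "\<And>q. m \<le> v0 q" using assms(1) by (auto simp: bdd_below_def)
  obtain B where B: "\<And>q. \<bar>v q\<bar> \<le> B"
    using bounded_range_if_compact_supp[OF assms(2,3)] by (auto simp: bounded_iff)
  have "m - B \<le> v0 q + v q" for q using m[of q] B[of q] by (simp add: abs_le_iff)
  then show ?thesis by (rule bdd_belowI2)
qed

theorem lemma4p1:
  fixes v0 v :: "real^'n \<Rightarrow> real" and E R :: real
  assumes "CARD('n) \<ge> 2"
    and "c_inf_on UNIV v0"
    and "c_inf_on UNIV v" and "compact (supp v)"
    and "bdd_above (range (\<lambda>q. v0 q + (1/2) * (q \<bullet> grad v0 q)))"
    and "bdd_below (range v0)"
    and "\<not> critical_value v0 E"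
    and "\<not> critical_value (\<lambda>q. v0 q + v q) E"
    and "E > (SUP q. v0 q + (1/2) * (q \<bullet> grad v0 q))"
  shows "assumption1 (mech_ham v0) (mech_ham (\<lambda>q. v0 q + v q)) E \<and>
         assumption2 (mech_ham v0) E {(q, p). mech_ham v0 (q, p) = E \<and> q \<bullet> p = R}"
proof -
  have "bdd_below (range (\<lambda>q. v0 q + v q))"
    using assms(6) c_inf_on_continuous_on[OF assms(3)] assms(4) by (rule bdd_below_range_add_compact_supp)
  then interpret M0: mechanical_system v0 + M1: mechanical_system "\<lambda>q. v0 q + v q"
    using assms(2,3,6) c_inf_on_add by unfold_locales
  interpret V: virial_energy v0 E using assms(5,9) by unfold_locales
  have perturbation: "(\<lambda>x. mech_ham (\<lambda>q. v0 q + v q) x - mech_ham v0 x) = (\<lambda>x. v (fst x))"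
    by (simp add: mech_ham_apply)
  have "assumption1 (mech_ham v0) (mech_ham (\<lambda>q. v0 q + v q)) E"
    unfolding assumption1_def flow_complete_on_def perturbation supp_comp_fst
    using frechet_derivative_mech_ham_nonzero[OF M0.differentiable_W assms(7)]
      frechet_derivative_mech_ham_nonzero[OF M1.differentiable_W assms(8)]
      M0.integral_curve_exists M1.integral_curve_exists V.flow_leaves_compact
      compact_sublevel_mech_ham_Times[OF c_inf_on_continuous_on[OF M1.c_inf_W] M1.bdd_below_W assms(4)]
      compact_sublevel_mech_ham_Times[OF c_inf_on_continuous_on[OF assms(2)] assms(6,4)]
    by blast
  moreover have "assumption2 (mech_ham v0) E {(q, p). mech_ham v0 (q, p) = E \<and> q \<bullet> p = R}"
    unfolding assumption2_def
    using V.smooth_submanifold_dilation_section V.ham_vf_not_tangent_dilation_section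
      V.unique_flow_from_dilation_section by auto
  ultimately show ?thesis ..
qed

end
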